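(* Let $q>1$, let $\Omega\subset\mathbb R^N$ be a domain, and let $u\in C^{2,1}(\Omega\times(0,\infty))$ be a large initial solution of $\partial_tu-\Delta u+u^q=0$ in $\Omega\times(0,\infty)$. Then for every bounded open set $G$ with $\overline G\subset\Omega$, $$\lim_{t\to0}t^{1/(q-1)}u(x,t)=c_q:=\Big(\frac1{q-1}\Big)^{1/(q-1)}\quad\text{uniformly in }x\in G.$$
   Context: A large initial solution is a positive function $u\in C^{2,1}(\Omega\times(0,\infty))$ solving $\partial_tu-\Delta u+u^q=0$ in $\Omega\times(0,\infty)$ such that $\lim_{t\to0}u(x,t)=\infty$ uniformly on every compact subset of $\Omega$. *)

theory Defs
  imports "HOL-Analysis.Analysis"
begin

text \<open>Points of R^N are modelled as real^'n (N = CARD('n)); u x t is u at (x,t).\<close>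

definition dt :: "(real ^ 'n::finite \<Rightarrow> real \<Rightarrow> real) \<Rightarrow> real ^ 'n \<Rightarrow> real \<Rightarrow> real" where
  "dt u x t = deriv (\<lambda>s. u x s) t"

definition dx :: "'n::finite \<Rightarrow> (real ^ 'n \<Rightarrow> real \<Rightarrow> real) \<Rightarrow> real ^ 'n \<Rightarrow> real \<Rightarrow> real" where
  "dx i u x t = deriv (\<lambda>h. u (x + h *\<^sub>R axis i 1) t) 0"

definition laplacian :: "(real ^ 'n::finite \<Rightarrow> real \<Rightarrow> real) \<Rightarrow> real ^ 'n \<Rightarrow> real \<Rightarrow> real" where
  "laplacian u x t = (\<Sum>i\<in>UNIV. dx i (dx i u) x t)"

definition C21 :: "(real ^ 'n::finite) set \<Rightarrow> (real ^ 'n \<Rightarrow> real \<Rightarrow> real) \<Rightarrow> bool" where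
  "C21 \<Omega> u \<longleftrightarrow>
     (\<forall>x\<in>\<Omega>. \<forall>t>0.
        (\<lambda>s. u x s) differentiable (at t) \<and>
        (\<forall>i. (\<lambda>h. u (x + h *\<^sub>R axis i 1) t) differentiable (at 0)) \<and>
        (\<forall>i j. (\<lambda>h. dx i u (x + h *\<^sub>R axis j 1) t) differentiable (at 0))) \<and>
     continuous_on (\<Omega> \<times> {0<..}) (\<lambda>(x,t). u x t) \<and>
     continuous_on (\<Omega> \<times> {0<..}) (\<lambda>(x,t). dt u x t) \<and>
     (\<forall>i. continuous_on (\<Omega> \<times> {0<..}) (\<lambda>(x,t). dx i u x t)) \<and>
     (\<forall>i j. continuous_on (\<Omega> \<times> {0<..}) (\<lambda>(x,t). dx j (dx i u) x t))"

definition large_initial_solution ::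
    "real \<Rightarrow> (real ^ 'n::finite) set \<Rightarrow> (real ^ 'n \<Rightarrow> real \<Rightarrow> real) \<Rightarrow> bool" where
  "large_initial_solution q \<Omega> u \<longleftrightarrow>
     C21 \<Omega> u \<and>
     (\<forall>x\<in>\<Omega>. \<forall>t>0. u x t > 0) \<and>
     (\<forall>x\<in>\<Omega>. \<forall>t>0. dt u x t - laplacian u x t + u x t powr q = 0) \<and>
     (\<forall>K. compact K \<and> K \<subseteq> \<Omega> \<longrightarrow>
        (\<forall>M. \<exists>\<delta>>0. \<forall>t. 0 < t \<and> t < \<delta> \<longrightarrow> (\<forall>x\<in>K. u x t \<ge> M)))"

end

theory Submission
  imports Defs
begin

text \<open>
  The rate is that of the spatially constant solution, the blow-up profile
  phi(t) = c_q t^(-1/(q-1)) of the ODE y' = -y^q.  Both bounds come from a comparison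
  principle on space-time cylinders B(x0,r) x [a,b], proved from first principles: at a
  positive interior maximum of u - W (resp. W - u) the one-dimensional first and second
  derivative tests give u_t >= W_t (<=) and Laplace u <= Laplace W (>=), which contradicts
  the equation as soon as W is a classical super- (sub-)solution.

  Upper bound: phi(t - tau) + lam (R^2 - |x - x0|^2)^(-2/(q-1)) is a supersolution that is
  large on the parabolic boundary of a cylinder over a ball of radius < R; hence
  u(x0,t) <= phi(t) + C(R) after letting tau -> 0.
  Lower bound: theta phi(t + s - tau) (1 - |x - x0|^2/R^2)^2 is a subsolution for times
  below an explicit T0(theta); large initial data put it below u at an early time tau, so
  theta phi(t) <= u(x0,t) for t < T0(theta) after letting s -> 0.
\<close>

lemma deriv_nonneg_at_left_max:
  fixes g :: "real \<Rightarrow> real"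
  assumes "(g has_real_derivative d) (at t)" "\<rho> > 0"
    and "\<And>h. 0 < h \<Longrightarrow> h < \<rho> \<Longrightarrow> g (t - h) \<le> g t"
  shows "d \<ge> 0"
proof (rule ccontr)
  assume "\<not> d \<ge> 0"
  then obtain e where e: "e > 0" "\<And>h. h > 0 \<Longrightarrow> h < e \<Longrightarrow> g t < g (t - h)"
    using DERIV_neg_dec_left[OF assms(1)] by force
  define h where "h = min e \<rho> / 2"
  have "0 < h" "h < e" "h < \<rho>"
    using e assms(2) by (auto simp: h_def)
  then show False
    using e(2)[of h] assms(3)[of h] by auto
qed

lemma second_deriv_nonpos_at_max:
  fixes g g' :: "real \<Rightarrow> real"
  assumes "\<rho> > 0" and max: "\<And>h. \<bar>h\<bar> < \<rho> \<Longrightarrow> g h \<le> g 0"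
    and g': "\<And>h. \<bar>h\<bar> < \<rho> \<Longrightarrow> (g has_real_derivative g' h) (at h)"
    and g'': "(g' has_real_derivative d) (at 0)"
  shows "d \<le> 0"
proof (rule ccontr)
  assume "\<not> d \<le> 0"
  then obtain e where e: "e > 0" "\<And>h. h > 0 \<Longrightarrow> h < e \<Longrightarrow> g' 0 < g' h"
    using DERIV_pos_inc_right[OF g''] by force
  have crit: "g' 0 = 0"
    by (rule DERIV_local_max[OF g'[of 0] \<open>\<rho> > 0\<close>]) (use assms in auto)
  define h where "h = min e \<rho> / 2"
  have h: "0 < h" "h < e" "h < \<rho>"
    using e \<open>\<rho> > 0\<close> by (auto simp: h_def)
  obtain z where z: "0 < z" "z < h" "g h - g 0 = h * g' z"
    using MVT2[of 0 h g g'] h g' by force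
  have "g' z > 0"
    using e(2)[of z] z h crit by auto
  then have "g h > g 0"
    using z h(1) mult_pos_pos[of h "g' z"] by linarith
  then show False
    using max[of h] h by auto
qed

lemma norm_sq_axis_shift:
  fixes x x0 :: "real ^ 'n::finite"
  shows "(norm (x + h *\<^sub>R axis i 1 - x0))\<^sup>2 = (norm (x - x0))\<^sup>2 + 2 * h * (x - x0) $ i + h\<^sup>2"
proof -
  have "x + h *\<^sub>R axis i 1 - x0 = (x - x0) + h *\<^sub>R axis i 1"
    by (simp add: algebra_simps)
  then show ?thesis
    unfolding power2_norm_eq_inner
    by (simp add: inner_add_left inner_add_right inner_axis inner_commute[of "axis i 1"]
        inner_axis_axis power2_eq_square algebra_simps)
qed

lemma norm_sq_eq_sum_coords:
  fixes y :: "real ^ 'n::finite"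
  shows "(norm y)\<^sup>2 = (\<Sum>i\<in>UNIV. (y $ i)\<^sup>2)"
  unfolding power2_norm_eq_inner by (simp add: inner_vec_def power2_eq_square)

lemma axis_derivative_shift:
  fixes f :: "real ^ 'n::finite \<Rightarrow> real"
  assumes "((\<lambda>k. f (x + h *\<^sub>R axis i 1 + k *\<^sub>R axis i 1)) has_real_derivative d) (at 0)"
  shows "((\<lambda>h. f (x + h *\<^sub>R axis i 1)) has_real_derivative d) (at h)"
proof -
  have "(\<lambda>k. f (x + h *\<^sub>R axis i 1 + k *\<^sub>R axis i 1)) = (\<lambda>k. f (x + (k + h) *\<^sub>R axis i 1))"
    by (simp add: scaleR_add_left algebra_simps)
  then show ?thesis
    using assms DERIV_shift[of "\<lambda>h. f (x + h *\<^sub>R axis i 1)" d 0 h] by simp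
qed

lemma C21_continuous_on:
  assumes "C21 \<Omega> u" "S \<subseteq> \<Omega> \<times> {0<..}"
  shows "continuous_on S (\<lambda>p. u (fst p) (snd p))"
proof -
  have "continuous_on S (\<lambda>(x, t). u x t)"
    using assms continuous_on_subset unfolding C21_def by blast
  then show ?thesis
    by (simp add: case_prod_beta)
qed

lemma C21_bounded_on_cylinder:
  assumes "C21 \<Omega> u" "cball x0 R \<subseteq> \<Omega>" "0 < a"
  obtains M where "\<And>y s. y \<in> cball x0 R \<Longrightarrow> a \<le> s \<Longrightarrow> s \<le> b \<Longrightarrow> u y s \<le> M"
proof -
  have "compact ((\<lambda>p. u (fst p) (snd p)) ` (cball x0 R \<times> {a..b}))"
    using assms by (intro compact_continuous_image C21_continuous_on[OF assms(1)] compact_Times) auto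
  then obtain M where "\<forall>z\<in>(\<lambda>p. u (fst p) (snd p)) ` (cball x0 R \<times> {a..b}). \<bar>z\<bar> \<le> M"
    by (meson compact_imp_bounded bounded_real)
  then show ?thesis
    by (intro that[of M]) force
qed

lemma C21_dt:
  assumes "C21 \<Omega> u" "x \<in> \<Omega>" "t > 0"
  shows "((\<lambda>s. u x s) has_real_derivative dt u x t) (at t)"
  using assms unfolding C21_def dt_def by (simp add: DERIV_deriv_iff_real_differentiable)

lemma C21_dx:
  assumes "C21 \<Omega> u" "x \<in> \<Omega>" "t > 0"
  shows "((\<lambda>h. u (x + h *\<^sub>R axis i 1) t) has_real_derivative dx i u x t) (at 0)"
  using assms unfolding C21_def dx_def by (simp add: DERIV_deriv_iff_real_differentiable)

lemma C21_dxx: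
  assumes "C21 \<Omega> u" "x \<in> \<Omega>" "t > 0"
  shows "((\<lambda>h. dx i u (x + h *\<^sub>R axis i 1) t) has_real_derivative dx i (dx i u) x t) (at 0)"
  using assms unfolding C21_def dx_def[of i "dx i u"] by (simp add: DERIV_deriv_iff_real_differentiable)

lemma parabolic_maximum_principle:
  fixes D :: "real ^ 'n::finite \<Rightarrow> real \<Rightarrow> real"
  assumes cont: "continuous_on (cball x0 r \<times> {a..b}) (\<lambda>p. D (fst p) (snd p))"
    and bottom: "\<And>x. x \<in> cball x0 r \<Longrightarrow> D x a \<le> 0"
    and lateral: "\<And>x t. dist x0 x = r \<Longrightarrow> a \<le> t \<Longrightarrow> t \<le> b \<Longrightarrow> D x t \<le> 0"
    and no_interior_max: "\<And>x t. x \<in> ball x0 r \<Longrightarrow> a < t \<Longrightarrow> t \<le> b \<Longrightarrow> D x t > 0 \<Longrightarrow>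
           (\<forall>y\<in>cball x0 r. \<forall>s\<in>{a..b}. D y s \<le> D x t) \<Longrightarrow> False"
    and "y \<in> cball x0 r" "s \<in> {a..b}"
  shows "D y s \<le> 0"
proof (rule ccontr)
  assume "\<not> D y s \<le> 0"
  moreover have "compact (cball x0 r \<times> {a..b})"
    by (intro compact_Times) auto
  ultimately obtain p where p: "p \<in> cball x0 r \<times> {a..b}"
      "\<And>z. z \<in> cball x0 r \<times> {a..b} \<Longrightarrow> D (fst z) (snd z) \<le> D (fst p) (snd p)"
    using continuous_attains_sup[OF _ _ cont] \<open>y \<in> cball x0 r\<close> \<open>s \<in> {a..b}\<close> by blast
  obtain x t where p_eq: "p = (x, t)"
    by (cases p)
  have xt: "x \<in> cball x0 r" "t \<in> {a..b}"
    using p(1) p_eq by auto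
  have max: "\<forall>y\<in>cball x0 r. \<forall>s\<in>{a..b}. D y s \<le> D x t"
    using p(2) p_eq by fastforce
  have pos: "D x t > 0"
    using max \<open>\<not> D y s \<le> 0\<close> \<open>y \<in> cball x0 r\<close> \<open>s \<in> {a..b}\<close> by force
  have "x \<in> ball x0 r"
    using xt lateral[of x t] pos by fastforce
  moreover have "a < t"
  proof -
    have "t \<noteq> a"
      using bottom[OF xt(1)] pos by auto
    then show ?thesis
      using xt(2) by simp
  qed
  ultimately show False
    using no_interior_max[OF _ _ _ pos max] xt by auto
qed

text \<open>
  At a parabolic maximum of sigma*(u - W), sigma = 1 or -1, the derivative tests compare the
  time derivatives and the Laplacians of u and W.
\<close>

lemma inequalities_at_parabolic_max:
  fixes u W :: "real ^ 'n::finite \<Rightarrow> real \<Rightarrow> real" and \<sigma> :: real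
  assumes sol: "C21 \<Omega> u" and nbhd: "\<rho> > 0" "ball x \<rho> \<subseteq> \<Omega>" "t > 0"
    and Wt: "((\<lambda>s. W x s) has_real_derivative Wt) (at t)"
    and Wx: "\<And>y i. y \<in> ball x \<rho> \<Longrightarrow> ((\<lambda>h. W (y + h *\<^sub>R axis i 1) t) has_real_derivative Wx i y) (at 0)"
    and Wxx: "\<And>i. ((\<lambda>h. Wx i (x + h *\<^sub>R axis i 1)) has_real_derivative Wxx i) (at 0)"
    and max_time: "\<And>h. 0 < h \<Longrightarrow> h < \<rho> \<Longrightarrow> \<sigma> * (u x (t - h) - W x (t - h)) \<le> \<sigma> * (u x t - W x t)"
    and max_space: "\<And>y. y \<in> ball x \<rho> \<Longrightarrow> \<sigma> * (u y t - W y t) \<le> \<sigma> * (u x t - W x t)"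
  shows "\<sigma> * (dt u x t - Wt) \<ge> 0"
    and "\<sigma> * (laplacian u x t - (\<Sum>i\<in>UNIV. Wxx i)) \<le> 0"
proof -
  have x: "x \<in> \<Omega>"
    using nbhd by auto
  show "\<sigma> * (dt u x t - Wt) \<ge> 0"
    by (rule deriv_nonneg_at_left_max[OF _ \<open>\<rho> > 0\<close> max_time])
      (intro DERIV_cmult DERIV_diff C21_dt[OF sol x \<open>t > 0\<close>] Wt)
  have "\<sigma> * (dx i (dx i u) x t - Wxx i) \<le> 0" for i
  proof (rule second_deriv_nonpos_at_max[OF \<open>\<rho> > 0\<close>])
    fix h :: real
    assume h: "\<bar>h\<bar> < \<rho>"
    have y: "x + h *\<^sub>R axis i 1 \<in> ball x \<rho>"
      using h by (simp add: dist_norm)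
    show "\<sigma> * (u (x + h *\<^sub>R axis i 1) t - W (x + h *\<^sub>R axis i 1) t)
        \<le> \<sigma> * (u (x + 0 *\<^sub>R axis i 1) t - W (x + 0 *\<^sub>R axis i 1) t)"
      using max_space[OF y] by simp
    show "((\<lambda>h. \<sigma> * (u (x + h *\<^sub>R axis i 1) t - W (x + h *\<^sub>R axis i 1) t)) has_real_derivative
        \<sigma> * (dx i u (x + h *\<^sub>R axis i 1) t - Wx i (x + h *\<^sub>R axis i 1))) (at h)"
    proof (intro DERIV_cmult DERIV_diff)
      have "x + h *\<^sub>R axis i 1 \<in> \<Omega>"
        using y nbhd(2) by blast
      then show "((\<lambda>h. u (x + h *\<^sub>R axis i 1) t) has_real_derivative
          dx i u (x + h *\<^sub>R axis i 1) t) (at h)"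
        using axis_derivative_shift[OF C21_dx[OF sol _ \<open>t > 0\<close>]] by blast
      show "((\<lambda>h. W (x + h *\<^sub>R axis i 1) t) has_real_derivative
          Wx i (x + h *\<^sub>R axis i 1)) (at h)"
        using axis_derivative_shift[OF Wx[OF y]] by blast
    qed
  next
    show "((\<lambda>h. \<sigma> * (dx i u (x + h *\<^sub>R axis i 1) t - Wx i (x + h *\<^sub>R axis i 1))) has_real_derivative
        \<sigma> * (dx i (dx i u) x t - Wxx i)) (at 0)"
      by (intro DERIV_cmult DERIV_diff C21_dxx[OF sol x \<open>t > 0\<close>] Wxx)
  qed
  then have "(\<Sum>i\<in>UNIV. \<sigma> * (dx i (dx i u) x t - Wxx i)) \<le> 0"
    by (intro sum_nonpos)
  then show "\<sigma> * (laplacian u x t - (\<Sum>i\<in>UNIV. Wxx i)) \<le> 0"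
    by (simp add: laplacian_def sum_distrib_left sum_subtractf right_diff_distrib)
qed

definition classical_on_cylinder ::
    "real ^ 'n::finite \<Rightarrow> real \<Rightarrow> real \<Rightarrow> real \<Rightarrow> (real ^ 'n \<Rightarrow> real \<Rightarrow> real) \<Rightarrow>
     (real ^ 'n \<Rightarrow> real \<Rightarrow> real) \<Rightarrow> ('n \<Rightarrow> real ^ 'n \<Rightarrow> real \<Rightarrow> real) \<Rightarrow>
     ('n \<Rightarrow> real ^ 'n \<Rightarrow> real \<Rightarrow> real) \<Rightarrow> bool" where
  "classical_on_cylinder x0 r a b W Wt Wx Wxx \<longleftrightarrow>
     continuous_on (cball x0 r \<times> {a..b}) (\<lambda>p. W (fst p) (snd p)) \<and>
     (\<forall>x\<in>ball x0 r. \<forall>t\<in>{a<..b}.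
        ((\<lambda>s. W x s) has_real_derivative Wt x t) (at t) \<and>
        (\<forall>i. ((\<lambda>h. W (x + h *\<^sub>R axis i 1) t) has_real_derivative Wx i x t) (at 0) \<and>
             ((\<lambda>h. Wx i (x + h *\<^sub>R axis i 1) t) has_real_derivative Wxx i x t) (at 0)))"

lemma parabolic_comparison:
  fixes u W :: "real ^ 'n::finite \<Rightarrow> real \<Rightarrow> real" and \<sigma> :: real
  assumes sol: "C21 \<Omega> u" and cyl: "cball x0 r \<subseteq> \<Omega>" "0 < a"
    and W: "classical_on_cylinder x0 r a b W Wt Wx Wxx"
    and bottom: "\<And>x. x \<in> cball x0 r \<Longrightarrow> \<sigma> * (u x a - W x a) \<le> 0"
    and lateral: "\<And>x t. dist x0 x = r \<Longrightarrow> a \<le> t \<Longrightarrow> t \<le> b \<Longrightarrow> \<sigma> * (u x t - W x t) \<le> 0"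
    and interior: "\<And>x t. x \<in> ball x0 r \<Longrightarrow> a < t \<Longrightarrow> t \<le> b \<Longrightarrow> \<sigma> * (u x t - W x t) > 0 \<Longrightarrow>
           \<sigma> * (dt u x t - Wt x t) \<ge> 0 \<Longrightarrow> \<sigma> * (laplacian u x t - (\<Sum>i\<in>UNIV. Wxx i x t)) \<le> 0 \<Longrightarrow> False"
    and "y \<in> cball x0 r" "s \<in> {a..b}"
  shows "\<sigma> * (u y s - W y s) \<le> 0"
proof (rule parabolic_maximum_principle[of x0 r a b "\<lambda>x t. \<sigma> * (u x t - W x t)"])
  have "continuous_on (cball x0 r \<times> {a..b}) (\<lambda>p. u (fst p) (snd p))"
    by (rule C21_continuous_on[OF sol]) (use cyl in auto)
  then show "continuous_on (cball x0 r \<times> {a..b}) (\<lambda>p. \<sigma> * (u (fst p) (snd p) - W (fst p) (snd p)))"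
    using W unfolding classical_on_cylinder_def by (intro continuous_intros) auto
next
  fix x t
  assume x: "x \<in> ball x0 r" and t: "a < t" "t \<le> b" and pos: "\<sigma> * (u x t - W x t) > 0"
    and max: "\<forall>y\<in>cball x0 r. \<forall>s\<in>{a..b}. \<sigma> * (u y s - W y s) \<le> \<sigma> * (u x t - W x t)"
  define \<rho> where "\<rho> = min (r - dist x0 x) (t - a)"
  have \<rho>: "\<rho> > 0"
    using x t by (simp add: \<rho>_def)
  have small_ball: "ball x \<rho> \<subseteq> ball x0 r"
    by (rule ball_subset_ball_iff[THEN iffD2]) (auto simp: \<rho>_def dist_commute)
  have derivs: "\<And>y. y \<in> ball x0 r \<Longrightarrow> ((\<lambda>s. W y s) has_real_derivative Wt y t) (at t) \<and>
      (\<forall>i. ((\<lambda>h. W (y + h *\<^sub>R axis i 1) t) has_real_derivative Wx i y t) (at 0) \<and>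
           ((\<lambda>h. Wx i (y + h *\<^sub>R axis i 1) t) has_real_derivative Wxx i y t) (at 0))"
    using W t unfolding classical_on_cylinder_def by auto
  have nbhd: "ball x \<rho> \<subseteq> \<Omega>" "0 < t"
    using order_trans[OF small_ball order_trans[OF ball_subset_cball cyl(1)]] cyl(2) t by auto
  have max_time: "\<And>h. 0 < h \<Longrightarrow> h < \<rho> \<Longrightarrow> \<sigma> * (u x (t - h) - W x (t - h)) \<le> \<sigma> * (u x t - W x t)"
    using max x t by (auto simp: \<rho>_def)
  have max_space: "\<And>y. y \<in> ball x \<rho> \<Longrightarrow> \<sigma> * (u y t - W y t) \<le> \<sigma> * (u x t - W x t)"
    using max small_ball t by auto
  note at_max = inequalities_at_parabolic_max[OF sol \<rho> nbhd, of W "Wt x t" "\<lambda>i y. Wx i y t" "\<lambda>i. Wxx i x t"]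
  have "\<sigma> * (dt u x t - Wt x t) \<ge> 0" "\<sigma> * (laplacian u x t - (\<Sum>i\<in>UNIV. Wxx i x t)) \<le> 0"
    using at_max derivs[OF x] derivs small_ball max_time max_space by blast+
  then show False
    using interior[OF x t pos] by blast
qed (use assms in auto)

definition supersolution_on_cylinder ::
    "real \<Rightarrow> real ^ 'n::finite \<Rightarrow> real \<Rightarrow> real \<Rightarrow> real \<Rightarrow> (real ^ 'n \<Rightarrow> real \<Rightarrow> real) \<Rightarrow> bool" where
  "supersolution_on_cylinder q x0 r a b W \<longleftrightarrow>
     (\<exists>Wt Wx Wxx. classical_on_cylinder x0 r a b W Wt Wx Wxx \<and>
        (\<forall>x\<in>ball x0 r. \<forall>t\<in>{a<..b}. W x t > 0 \<and> Wt x t - (\<Sum>i\<in>UNIV. Wxx i x t) + W x t powr q \<ge> 0))"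

definition subsolution_on_cylinder ::
    "real \<Rightarrow> real ^ 'n::finite \<Rightarrow> real \<Rightarrow> real \<Rightarrow> real \<Rightarrow> (real ^ 'n \<Rightarrow> real \<Rightarrow> real) \<Rightarrow> bool" where
  "subsolution_on_cylinder q x0 r a b W \<longleftrightarrow>
     (\<exists>Wt Wx Wxx. classical_on_cylinder x0 r a b W Wt Wx Wxx \<and>
        (\<forall>x\<in>ball x0 r. \<forall>t\<in>{a<..b}. Wt x t - (\<Sum>i\<in>UNIV. Wxx i x t) + W x t powr q \<le> 0))"

lemma supersolution_comparison:
  fixes u W :: "real ^ 'n::finite \<Rightarrow> real \<Rightarrow> real"
  assumes "q > 0" and sol: "C21 \<Omega> u"
    and eq: "\<forall>x\<in>\<Omega>. \<forall>t>0. dt u x t - laplacian u x t + u x t powr q = 0"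
    and cyl: "cball x0 r \<subseteq> \<Omega>" "0 < a"
    and W: "supersolution_on_cylinder q x0 r a b W"
    and bottom: "\<And>x. x \<in> cball x0 r \<Longrightarrow> u x a \<le> W x a"
    and lateral: "\<And>x t. dist x0 x = r \<Longrightarrow> a \<le> t \<Longrightarrow> t \<le> b \<Longrightarrow> u x t \<le> W x t"
    and "y \<in> cball x0 r" "s \<in> {a..b}"
  shows "u y s \<le> W y s"
proof -
  obtain Wt Wx Wxx where cl: "classical_on_cylinder x0 r a b W Wt Wx Wxx"
    and super: "\<And>x t. x \<in> ball x0 r \<Longrightarrow> t \<in> {a<..b} \<Longrightarrow>
                  W x t > 0 \<and> Wt x t - (\<Sum>i\<in>UNIV. Wxx i x t) + W x t powr q \<ge> 0"
    using W unfolding supersolution_on_cylinder_def by blast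
  have "1 * (u y s - W y s) \<le> 0"
  proof (rule parabolic_comparison[OF sol cyl cl])
    fix x t
    assume x: "x \<in> ball x0 r" and t: "a < t" "t \<le> b" and above: "1 * (u x t - W x t) > 0"
      and "1 * (dt u x t - Wt x t) \<ge> 0" "1 * (laplacian u x t - (\<Sum>i\<in>UNIV. Wxx i x t)) \<le> 0"
    then have "dt u x t - laplacian u x t \<ge> Wt x t - (\<Sum>i\<in>UNIV. Wxx i x t)"
      by simp
    moreover have "x \<in> \<Omega>" "t > 0"
      using cyl x t by auto
    then have "dt u x t - laplacian u x t + u x t powr q = 0"
      using eq by blast
    moreover have W_pos: "W x t > 0" and "Wt x t - (\<Sum>i\<in>UNIV. Wxx i x t) + W x t powr q \<ge> 0"
      using super[OF x] t by auto
    moreover have "W x t powr q < u x t powr q"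
      using W_pos above \<open>q > 0\<close> by (intro powr_less_mono2) auto
    ultimately show False
      by linarith
  qed (use assms in auto)
  then show ?thesis
    by simp
qed

lemma subsolution_comparison:
  fixes u W :: "real ^ 'n::finite \<Rightarrow> real \<Rightarrow> real"
  assumes "q > 0" and sol: "C21 \<Omega> u" and pos: "\<forall>x\<in>\<Omega>. \<forall>t>0. u x t > 0"
    and eq: "\<forall>x\<in>\<Omega>. \<forall>t>0. dt u x t - laplacian u x t + u x t powr q = 0"
    and cyl: "cball x0 r \<subseteq> \<Omega>" "0 < a"
    and W: "subsolution_on_cylinder q x0 r a b W"
    and bottom: "\<And>x. x \<in> cball x0 r \<Longrightarrow> W x a \<le> u x a"
    and lateral: "\<And>x t. dist x0 x = r \<Longrightarrow> a \<le> t \<Longrightarrow> t \<le> b \<Longrightarrow> W x t \<le> u x t"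
    and "y \<in> cball x0 r" "s \<in> {a..b}"
  shows "W y s \<le> u y s"
proof -
  obtain Wt Wx Wxx where cl: "classical_on_cylinder x0 r a b W Wt Wx Wxx"
    and sub: "\<And>x t. x \<in> ball x0 r \<Longrightarrow> t \<in> {a<..b} \<Longrightarrow>
                Wt x t - (\<Sum>i\<in>UNIV. Wxx i x t) + W x t powr q \<le> 0"
    using W unfolding subsolution_on_cylinder_def by blast
  have "(- 1) * (u y s - W y s) \<le> 0"
  proof (rule parabolic_comparison[OF sol cyl cl])
    fix x t
    assume x: "x \<in> ball x0 r" and t: "a < t" "t \<le> b" and below: "(- 1) * (u x t - W x t) > 0"
      and "(- 1) * (dt u x t - Wt x t) \<ge> 0" "(- 1) * (laplacian u x t - (\<Sum>i\<in>UNIV. Wxx i x t)) \<le> 0"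
    then have "dt u x t - laplacian u x t \<le> Wt x t - (\<Sum>i\<in>UNIV. Wxx i x t)"
      by simp
    moreover have "x \<in> \<Omega>" "t > 0"
      using cyl x t by auto
    then have "dt u x t - laplacian u x t + u x t powr q = 0"
      using eq by blast
    moreover have "u x t > 0"
      using pos \<open>x \<in> \<Omega>\<close> \<open>t > 0\<close> by blast
    then have "u x t powr q < W x t powr q"
      using below \<open>q > 0\<close> by (intro powr_less_mono2) auto
    moreover have "Wt x t - (\<Sum>i\<in>UNIV. Wxx i x t) + W x t powr q \<le> 0"
      using sub[OF x] t by auto
    ultimately show False
      by linarith
  qed (use assms in auto)
  then show ?thesis
    by simp
qed

lemma radial_axis_derivative:
  fixes x0 y :: "real ^ 'n::finite" and g :: "real \<Rightarrow> real"
  assumes "(g has_real_derivative d) (at ((norm (y - x0))\<^sup>2))"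
  shows "((\<lambda>h. g ((norm (y + h *\<^sub>R axis i 1 - x0))\<^sup>2)) has_real_derivative 2 * (y - x0) $ i * d) (at 0)"
proof -
  have "((\<lambda>h. (norm (y - x0))\<^sup>2 + 2 * h * (y - x0) $ i + h\<^sup>2) has_real_derivative 2 * (y - x0) $ i) (at 0)"
    by (auto intro!: derivative_eq_intros)
  from DERIV_chain2[OF _ this, of g d] assms
  show ?thesis
    unfolding norm_sq_axis_shift by (simp add: mult.commute)
qed

lemma radial_axis_second_derivative:
  fixes x0 x :: "real ^ 'n::finite" and g' :: "real \<Rightarrow> real"
  assumes "(g' has_real_derivative d) (at ((norm (x - x0))\<^sup>2))"
  shows "((\<lambda>h. 2 * (x + h *\<^sub>R axis i 1 - x0) $ i * g' ((norm (x + h *\<^sub>R axis i 1 - x0))\<^sup>2))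
           has_real_derivative 2 * g' ((norm (x - x0))\<^sup>2) + 4 * ((x - x0) $ i)\<^sup>2 * d) (at 0)"
proof -
  have coord: "(x + h *\<^sub>R axis i 1 - x0) $ i = (x - x0) $ i + h" for h
    by (simp add: axis_def)
  have "((\<lambda>h. 2 * ((x - x0) $ i + h)) has_real_derivative 2 * (0 + 1)) (at 0)"
    by (intro DERIV_cmult DERIV_add DERIV_const DERIV_ident)
  from DERIV_mult[OF this radial_axis_derivative[OF assms, of i]]
  have "((\<lambda>h. 2 * ((x - x0) $ i + h) * g' ((norm (x + h *\<^sub>R axis i 1 - x0))\<^sup>2))
      has_real_derivative 2 * (0 + 1) * g' ((norm (x + 0 *\<^sub>R axis i 1 - x0))\<^sup>2)
        + 2 * (x - x0) $ i * d * (2 * ((x - x0) $ i + 0))) (at 0)"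
    by simp
  then show ?thesis
    unfolding coord by (simp add: power2_eq_square algebra_simps)
qed

lemma sum_radial_second_derivatives:
  fixes x x0 :: "real ^ 'n::finite"
  shows "(\<Sum>i\<in>UNIV. c * (2 * g1 + 4 * ((x - x0) $ i)\<^sup>2 * g2))
       = c * (2 * real CARD('n) * g1 + 4 * (norm (x - x0))\<^sup>2 * g2)"
  by (simp add: norm_sq_eq_sum_coords sum.distrib sum_distrib_left sum_distrib_right algebra_simps)

lemma radial_barrier_classical:
  fixes x0 :: "real ^ 'n::finite" and A A' B B' g g1 g2 :: "real \<Rightarrow> real"
  assumes A: "continuous_on {a..b} A" "\<And>t. a < t \<Longrightarrow> t \<le> b \<Longrightarrow> (A has_real_derivative A' t) (at t)"
    and B: "continuous_on {a..b} B" "\<And>t. a < t \<Longrightarrow> t \<le> b \<Longrightarrow> (B has_real_derivative B' t) (at t)"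
    and g: "continuous_on {0..r\<^sup>2} g"
      "\<And>\<rho>. 0 \<le> \<rho> \<Longrightarrow> \<rho> < r\<^sup>2 \<Longrightarrow> (g has_real_derivative g1 \<rho>) (at \<rho>)"
      "\<And>\<rho>. 0 \<le> \<rho> \<Longrightarrow> \<rho> < r\<^sup>2 \<Longrightarrow> (g1 has_real_derivative g2 \<rho>) (at \<rho>)"
  shows "classical_on_cylinder x0 r a b
     (\<lambda>x t. A t + B t * g ((norm (x - x0))\<^sup>2))
     (\<lambda>x t. A' t + B' t * g ((norm (x - x0))\<^sup>2))
     (\<lambda>i x t. B t * (2 * (x - x0) $ i * g1 ((norm (x - x0))\<^sup>2)))
     (\<lambda>i x t. B t * (2 * g1 ((norm (x - x0))\<^sup>2) + 4 * ((x - x0) $ i)\<^sup>2 * g2 ((norm (x - x0))\<^sup>2)))"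
  unfolding classical_on_cylinder_def
proof (intro conjI ballI allI)
  have "continuous_on (cball x0 r \<times> {a..b}) (\<lambda>p. g ((norm (fst p - x0))\<^sup>2))"
  proof (rule continuous_on_compose2[OF g(1)])
    show "continuous_on (cball x0 r \<times> {a..b}) (\<lambda>p. (norm (fst p - x0))\<^sup>2)"
      by (intro continuous_intros)
    show "(\<lambda>p. (norm (fst p - x0))\<^sup>2) ` (cball x0 r \<times> {a..b}) \<subseteq> {0..r\<^sup>2}"
      by (auto simp: dist_norm norm_minus_commute intro!: power_mono)
  qed
  moreover have "continuous_on (cball x0 r \<times> {a..b}) (\<lambda>p. A (snd p))"
    "continuous_on (cball x0 r \<times> {a..b}) (\<lambda>p. B (snd p))"
    by (auto intro!: continuous_on_compose2[OF A(1)] continuous_on_compose2[OF B(1)] continuous_intros)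
  ultimately show "continuous_on (cball x0 r \<times> {a..b})
      (\<lambda>p. A (snd p) + B (snd p) * g ((norm (fst p - x0))\<^sup>2))"
    by (intro continuous_intros)
next
  fix x t i
  assume x: "x \<in> ball x0 r" and t: "t \<in> {a<..b}"
  have S: "0 \<le> (norm (x - x0))\<^sup>2" "(norm (x - x0))\<^sup>2 < r\<^sup>2"
    using x by (auto simp: dist_norm norm_minus_commute intro!: power_strict_mono)
  show "((\<lambda>s. A s + B s * g ((norm (x - x0))\<^sup>2)) has_real_derivative
      A' t + B' t * g ((norm (x - x0))\<^sup>2)) (at t)"
    using t by (intro DERIV_add DERIV_cmult_right A(2) B(2)) auto
  show "((\<lambda>h. A t + B t * g ((norm (x + h *\<^sub>R axis i 1 - x0))\<^sup>2)) has_real_derivative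
      B t * (2 * (x - x0) $ i * g1 ((norm (x - x0))\<^sup>2))) (at 0)"
    using radial_axis_derivative[OF g(2)[OF S], of i] by (auto intro!: derivative_eq_intros)
  show "((\<lambda>h. B t * (2 * (x + h *\<^sub>R axis i 1 - x0) $ i * g1 ((norm (x + h *\<^sub>R axis i 1 - x0))\<^sup>2)))
      has_real_derivative B t * (2 * g1 ((norm (x - x0))\<^sup>2) + 4 * ((x - x0) $ i)\<^sup>2 * g2 ((norm (x - x0))\<^sup>2))) (at 0)"
    by (intro DERIV_cmult radial_axis_second_derivative g(3) S)
qed

text \<open>
  The blow-up profile phi(t) = c_q t^(-1/(q-1)), the solution of y' = -y^q with y(0+) =
  infinity.
\<close>

definition blowup_profile :: "real \<Rightarrow> real \<Rightarrow> real" where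
  "blowup_profile q t = (1 / (q - 1)) powr (1 / (q - 1)) * t powr (- (1 / (q - 1)))"

lemma blowup_profile_pos: "q > 1 \<Longrightarrow> t > 0 \<Longrightarrow> blowup_profile q t > 0"
  by (simp add: blowup_profile_def)

lemma blowup_profile_powr:
  assumes "q > 1" "t > 0"
  shows "blowup_profile q t powr q = blowup_profile q t * ((1 / (q - 1)) / t)"
proof -
  have "blowup_profile q t powr (q - 1)
      = ((1 / (q - 1)) powr (1 / (q - 1))) powr (q - 1) * (t powr (- (1 / (q - 1)))) powr (q - 1)"
    unfolding blowup_profile_def using assms by (simp add: powr_mult)
  also have "\<dots> = (1 / (q - 1)) * t powr (- 1)"
    using assms by (simp add: powr_powr)
  also have "\<dots> = (1 / (q - 1)) / t"
    using assms by (simp add: powr_minus divide_simps)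
  finally have "blowup_profile q t powr (q - 1) = (1 / (q - 1)) / t" .
  moreover have "blowup_profile q t powr q = blowup_profile q t * blowup_profile q t powr (q - 1)"
    using blowup_profile_pos[OF assms] by (simp add: powr_mult_base)
  ultimately show ?thesis
    by simp
qed

lemma blowup_profile_deriv:
  assumes "q > 1" "t > 0"
  shows "(blowup_profile q has_real_derivative - (blowup_profile q t powr q)) (at t)"
proof -
  let ?c = "(1 / (q - 1)) powr (1 / (q - 1))" and ?b = "1 / (q - 1)"
  have "((\<lambda>s. ?c * s powr (- ?b)) has_real_derivative ?c * ((- ?b) * t powr (- ?b - 1))) (at t)"
    by (intro DERIV_cmult has_real_derivative_powr) (use assms in auto)
  moreover have "t powr (- ?b - 1) = t powr (- ?b) / t"
    using assms by (simp add: powr_diff)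
  ultimately show ?thesis
    unfolding blowup_profile_powr[OF assms] by (simp add: blowup_profile_def[abs_def] field_simps)
qed

lemma blowup_profile_antimono:
  assumes "q > 1" "0 < s" "s \<le> t"
  shows "blowup_profile q t \<le> blowup_profile q s"
  unfolding blowup_profile_def using assms by (intro mult_left_mono) (auto intro!: powr_mono2')

lemma blowup_profile_scaling:
  assumes "q > 1" "t > 0"
  shows "t powr (1 / (q - 1)) * blowup_profile q t = (1 / (q - 1)) powr (1 / (q - 1))"
  unfolding blowup_profile_def using assms by (simp add: powr_minus field_simps)

lemma blowup_profile_continuous: "q > 1 \<Longrightarrow> continuous_on {0<..} (blowup_profile q)"
  unfolding blowup_profile_def by (intro continuous_intros) auto

lemma blowup_profile_isCont: "q > 1 \<Longrightarrow> t > 0 \<Longrightarrow> isCont (blowup_profile q) t"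
  using blowup_profile_continuous continuous_on_eq_continuous_at[of "{0<..}" "blowup_profile q"] by auto

lemma shifted_profile_regular:
  assumes q: "q > 1" and "\<tau> < a"
  shows "continuous_on {a..b} (\<lambda>t. blowup_profile q (t - \<tau>))"
    and "a < t \<Longrightarrow>
      ((\<lambda>t. blowup_profile q (t - \<tau>)) has_real_derivative - (blowup_profile q (t - \<tau>) powr q)) (at t)"
proof -
  show "continuous_on {a..b} (\<lambda>t. blowup_profile q (t - \<tau>))"
    using \<open>\<tau> < a\<close> by (auto intro!: continuous_on_compose2[OF blowup_profile_continuous[OF q]] continuous_intros)
  assume "a < t"
  then show "((\<lambda>t. blowup_profile q (t - \<tau>)) has_real_derivative - (blowup_profile q (t - \<tau>) powr q)) (at t)"
    using DERIV_shift[of "blowup_profile q" _ t "- \<tau>"] blowup_profile_deriv[OF q, of "t - \<tau>"] \<open>\<tau> < a\<close>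
    by simp
qed

lemma powr_neg_exceeds_near_zero:
  fixes a c T M :: real
  assumes "a > 0" "c > 0" "T > 0"
  shows "\<exists>e. 0 < e \<and> e < T \<and> c * e powr (- a) > M"
proof -
  define m where "m = c / (\<bar>M\<bar> + 1)"
  have m: "m > 0"
    using assms by (simp add: m_def)
  define e where "e = min (T / 2) (m powr (1 / a))"
  have e: "0 < e" "e < T"
    using assms m by (auto simp: e_def)
  have "e powr a \<le> (m powr (1 / a)) powr a"
    using e assms by (intro powr_mono2) (auto simp: e_def)
  also have "\<dots> = m"
    using assms m by (simp add: powr_powr)
  finally have "c / m \<le> c / e powr a"
    using e assms m by (intro divide_left_mono) auto
  moreover have "c / m = \<bar>M\<bar> + 1"
    using assms by (simp add: m_def)
  ultimately have "c * e powr (- a) \<ge> \<bar>M\<bar> + 1"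
    by (simp add: powr_minus divide_inverse)
  then show ?thesis
    using e by (intro exI[of _ e]) auto
qed

text \<open>
  Superadditivity of s^q for q >= 1: a sum of two supersolution terms absorbs both
  nonlinearities.
\<close>

lemma powr_superadditive:
  fixes a b q :: real
  assumes "a > 0" "b > 0" "q \<ge> 1"
  shows "a powr q + b powr q \<le> (a + b) powr q"
proof -
  have "a powr (q - 1) \<le> (a + b) powr (q - 1)" "b powr (q - 1) \<le> (a + b) powr (q - 1)"
    using assms by (auto intro!: powr_mono2)
  then have "a * a powr (q - 1) + b * b powr (q - 1) \<le> (a + b) * (a + b) powr (q - 1)"
    using assms by (simp add: distrib_right add_mono mult_left_mono)
  then show ?thesis
    using assms by (simp add: powr_mult_base)
qed

lemma osserman_barrier_derivatives:
  fixes al R \<rho> :: real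
  assumes "\<rho> < R\<^sup>2"
  shows "((\<lambda>\<rho>. (R\<^sup>2 - \<rho>) powr (- al)) has_real_derivative al * (R\<^sup>2 - \<rho>) powr (- al - 1)) (at \<rho>)"
    and "((\<lambda>\<rho>. al * (R\<^sup>2 - \<rho>) powr (- al - 1)) has_real_derivative
           al * (al + 1) * (R\<^sup>2 - \<rho>) powr (- al - 2)) (at \<rho>)"
proof -
  have exponent: "- al - 1 - 1 = - al - 2"
    by simp
  show "((\<lambda>\<rho>. (R\<^sup>2 - \<rho>) powr (- al)) has_real_derivative al * (R\<^sup>2 - \<rho>) powr (- al - 1)) (at \<rho>)"
    using assms by (auto intro!: derivative_eq_intros)
  show "((\<lambda>\<rho>. al * (R\<^sup>2 - \<rho>) powr (- al - 1)) has_real_derivative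
           al * (al + 1) * (R\<^sup>2 - \<rho>) powr (- al - 2)) (at \<rho>)"
    using assms by (auto intro!: derivative_eq_intros simp: exponent algebra_simps)
qed

text \<open>
  With al = 2/(q-1) and lam chosen as below, V(x) = lam (R^2 - |x - x0|^2)^(-al) satisfies
  Laplace V <= V^q in the ball (a barrier of Keller-Osserman type).
\<close>

lemma osserman_inequality:
  fixes lam al q R S N C :: real
  assumes q: "q > 1" and al: "al = 2 / (q - 1)" and C: "C = 4 * al * (al + 1) + 2 * N * al"
    and N: "N \<ge> 0" and lam: "lam = (C * R\<^sup>2) powr (1 / (q - 1))"
    and S: "0 \<le> S" "S < R\<^sup>2"
  shows "2 * N * (lam * al * (R\<^sup>2 - S) powr (- al - 1))
         + 4 * S * (lam * al * (al + 1) * (R\<^sup>2 - S) powr (- al - 2))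
       \<le> (lam * (R\<^sup>2 - S) powr (- al)) powr q"
proof -
  define p where "p = R\<^sup>2 - S"
  have p: "p > 0" "p \<le> R\<^sup>2"
    using S by (auto simp: p_def)
  have al_pos: "al > 0"
    using q al by simp
  have C_pos: "C > 0"
    using C al_pos N by (simp add: add_pos_nonneg)
  have R2: "R\<^sup>2 > 0"
    using S by linarith
  have lam_pos: "lam > 0"
    using lam C_pos R2 by simp
  have "lam powr q = lam * lam powr (q - 1)"
    using lam_pos by (simp add: powr_mult_base)
  also have "lam powr (q - 1) = C * R\<^sup>2"
    using lam q C_pos R2 by (simp add: powr_powr)
  finally have lam_q: "lam powr q = lam * (C * R\<^sup>2)" .
  have "- al * q = - al - 2"
    using q al by (simp add: field_simps)
  then have p_q: "(p powr (- al)) powr q = p powr (- al - 2)"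
    using p by (simp add: powr_powr)
  have "- al - 1 = 1 + (- al - 2)"
    by simp
  then have "p powr (- al - 1) = p powr (1 + (- al - 2))"
    by (rule arg_cong)
  then have p_1: "p powr (- al - 1) = p * p powr (- al - 2)"
    using p(1) by (simp only: powr_add powr_one)
  have "al * (2 * N * p + 4 * (al + 1) * S) \<le> al * (2 * N * R\<^sup>2 + 4 * (al + 1) * R\<^sup>2)"
    using p S N al_pos by (intro mult_left_mono add_mono) auto
  also have "\<dots> = C * R\<^sup>2"
    using C by (simp add: algebra_simps)
  finally have "lam * (al * (2 * N * p + 4 * (al + 1) * S)) * p powr (- al - 2)
      \<le> lam * (C * R\<^sup>2) * p powr (- al - 2)"
    using lam_pos p by (intro mult_right_mono mult_left_mono) auto
  moreover have "(lam * p powr (- al)) powr q = lam * (C * R\<^sup>2) * p powr (- al - 2)"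
    using lam_pos p by (simp add: powr_mult lam_q p_q)
  ultimately show ?thesis
    unfolding p_def[symmetric] p_1 by (simp add: algebra_simps)
qed

text \<open>
  Hence phi(t - tau) + V(x) is a positive supersolution, in scalar form,
\<close>

lemma upper_barrier_inequality:
  fixes lam al q R S N C P :: real
  assumes q: "q > 1" and al: "al = 2 / (q - 1)" and C: "C = 4 * al * (al + 1) + 2 * N * al"
    and N: "N \<ge> 0" and lam: "lam = (C * R\<^sup>2) powr (1 / (q - 1))"
    and S: "0 \<le> S" "S < R\<^sup>2" and P: "P > 0"
  shows "P + lam * (R\<^sup>2 - S) powr (- al) > 0"
    and "- (P powr q) - (2 * N * (lam * al * (R\<^sup>2 - S) powr (- al - 1))
           + 4 * S * (lam * al * (al + 1) * (R\<^sup>2 - S) powr (- al - 2)))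
         + (P + lam * (R\<^sup>2 - S) powr (- al)) powr q \<ge> 0"
proof -
  have "C > 0"
    using C N q al by (simp add: add_pos_nonneg)
  moreover have "R\<^sup>2 > 0"
    using S by linarith
  ultimately have V: "lam * (R\<^sup>2 - S) powr (- al) > 0"
    using lam S by simp
  then show "P + lam * (R\<^sup>2 - S) powr (- al) > 0"
    using P by simp
  show "- (P powr q) - (2 * N * (lam * al * (R\<^sup>2 - S) powr (- al - 1))
           + 4 * S * (lam * al * (al + 1) * (R\<^sup>2 - S) powr (- al - 2)))
         + (P + lam * (R\<^sup>2 - S) powr (- al)) powr q \<ge> 0"
    using powr_superadditive[OF P V, of q] osserman_inequality[OF q al C N lam S] q by linarith
qed

lemma upper_barrier_is_supersolution:
  fixes x0 :: "real ^ 'n::finite"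
  assumes q: "q > 1" and al: "al = 2 / (q - 1)" and C: "C = 4 * al * (al + 1) + 2 * real CARD('n) * al"
    and lam: "lam = (C * R\<^sup>2) powr (1 / (q - 1))" and r: "0 < r" "r < R" and \<tau>: "\<tau> < a"
  shows "supersolution_on_cylinder q x0 r a b
           (\<lambda>x t. blowup_profile q (t - \<tau>) + lam * (R\<^sup>2 - (norm (x - x0))\<^sup>2) powr (- al))"
proof -
  define Wt where "Wt x t = - (blowup_profile q (t - \<tau>) powr q) + 0 * (R\<^sup>2 - (norm (x - x0))\<^sup>2) powr (- al)"
    for x t
  define Wx where "Wx i x t = lam * (2 * (x - x0) $ i * (al * (R\<^sup>2 - (norm (x - x0))\<^sup>2) powr (- al - 1)))"
    for i x and t :: real
  define Wxx where "Wxx i x t = lam * (2 * (al * (R\<^sup>2 - (norm (x - x0))\<^sup>2) powr (- al - 1))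
      + 4 * ((x - x0) $ i)\<^sup>2 * (al * (al + 1) * (R\<^sup>2 - (norm (x - x0))\<^sup>2) powr (- al - 2)))"
    for i x and t :: real
  have rR: "r\<^sup>2 < R\<^sup>2"
    using r by (simp add: power_strict_mono)
  have "classical_on_cylinder x0 r a b
      (\<lambda>x t. blowup_profile q (t - \<tau>) + lam * (R\<^sup>2 - (norm (x - x0))\<^sup>2) powr (- al)) Wt Wx Wxx"
    unfolding Wt_def Wx_def Wxx_def
  proof (rule radial_barrier_classical[where B = "\<lambda>_. lam" and g = "\<lambda>\<rho>. (R\<^sup>2 - \<rho>) powr (- al)"])
    show "continuous_on {a..b} (\<lambda>t. blowup_profile q (t - \<tau>))"
      "a < t \<Longrightarrow> ((\<lambda>t. blowup_profile q (t - \<tau>)) has_real_derivative - (blowup_profile q (t - \<tau>) powr q)) (at t)"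
      for t
      using shifted_profile_regular[OF q \<tau>] by blast+
    show "continuous_on {a..b} (\<lambda>_. lam)" "((\<lambda>_. lam) has_real_derivative 0) (at t)" for t
      by (rule continuous_on_const DERIV_const)+
    show "continuous_on {0..r\<^sup>2} (\<lambda>\<rho>. (R\<^sup>2 - \<rho>) powr (- al))"
      using rR by (intro continuous_intros) auto
    show "((\<lambda>\<rho>. (R\<^sup>2 - \<rho>) powr (- al)) has_real_derivative al * (R\<^sup>2 - \<rho>) powr (- al - 1)) (at \<rho>)"
      "((\<lambda>\<rho>. al * (R\<^sup>2 - \<rho>) powr (- al - 1)) has_real_derivative
         al * (al + 1) * (R\<^sup>2 - \<rho>) powr (- al - 2)) (at \<rho>)"
      if "\<rho> < r\<^sup>2" for \<rho>
      using osserman_barrier_derivatives[of \<rho> R al] that rR by simp_all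
  qed
  moreover have "blowup_profile q (t - \<tau>) + lam * (R\<^sup>2 - (norm (x - x0))\<^sup>2) powr (- al) > 0 \<and>
      Wt x t - (\<Sum>i\<in>UNIV. Wxx i x t)
        + (blowup_profile q (t - \<tau>) + lam * (R\<^sup>2 - (norm (x - x0))\<^sup>2) powr (- al)) powr q \<ge> 0"
    if x: "x \<in> ball x0 r" and t: "t \<in> {a<..b}" for x t
  proof -
    have "norm (x - x0) < r"
      using x by (simp add: dist_norm norm_minus_commute)
    then have "(norm (x - x0))\<^sup>2 < r\<^sup>2"
      by (simp add: power_strict_mono)
    then have S: "0 \<le> (norm (x - x0))\<^sup>2" "(norm (x - x0))\<^sup>2 < R\<^sup>2"
      using rR by auto
    have P: "blowup_profile q (t - \<tau>) > 0"
      using t \<tau> blowup_profile_pos[OF q, of "t - \<tau>"] by simp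
    have "(\<Sum>i\<in>UNIV. Wxx i x t)
        = 2 * real CARD('n) * (lam * al * (R\<^sup>2 - (norm (x - x0))\<^sup>2) powr (- al - 1))
          + 4 * (norm (x - x0))\<^sup>2 * (lam * al * (al + 1) * (R\<^sup>2 - (norm (x - x0))\<^sup>2) powr (- al - 2))"
      unfolding Wxx_def sum_radial_second_derivatives by (simp add: algebra_simps)
    then show ?thesis
      using upper_barrier_inequality[OF q al C _ lam S P] by (simp add: Wt_def)
  qed
  ultimately show ?thesis
    unfolding supersolution_on_cylinder_def by blast
qed

lemma osserman_barrier_on_sphere:
  fixes x0 :: "real ^ 'n::finite"
  assumes al: "al > 0" and lam: "lam > 0" and R: "R > 0"
  obtains r where "0 < r" "r < R"
    "\<And>x. x \<in> cball x0 r \<Longrightarrow> lam * (R\<^sup>2 - (norm (x - x0))\<^sup>2) powr (- al) > 0"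
    "\<And>x. dist x0 x = r \<Longrightarrow> lam * (R\<^sup>2 - (norm (x - x0))\<^sup>2) powr (- al) > M"
proof -
  obtain \<epsilon> where \<epsilon>: "0 < \<epsilon>" "\<epsilon> < R\<^sup>2" "lam * \<epsilon> powr (- al) > M"
    using powr_neg_exceeds_near_zero[OF al lam, of "R\<^sup>2" M] R by auto
  define r where "r = sqrt (R\<^sup>2 - \<epsilon>)"
  have r: "r > 0" "r\<^sup>2 = R\<^sup>2 - \<epsilon>" "r < R"
    using \<epsilon> R real_sqrt_less_mono[of "R\<^sup>2 - \<epsilon>" "R\<^sup>2"] by (auto simp: r_def)
  show ?thesis
  proof (rule that[OF r(1) r(3)])
    fix x
    assume "x \<in> cball x0 r"
    then have "norm (x - x0) \<le> r"
      by (simp add: dist_norm norm_minus_commute)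
    then have "(norm (x - x0))\<^sup>2 \<le> r\<^sup>2"
      by (simp add: power_mono)
    then have "R\<^sup>2 - (norm (x - x0))\<^sup>2 > 0"
      using r \<epsilon> by linarith
    then show "lam * (R\<^sup>2 - (norm (x - x0))\<^sup>2) powr (- al) > 0"
      using lam by simp
  next
    fix x
    assume "dist x0 x = r"
    then have "(norm (x - x0))\<^sup>2 = R\<^sup>2 - \<epsilon>"
      using r(2) by (simp add: dist_norm norm_minus_commute)
    then show "lam * (R\<^sup>2 - (norm (x - x0))\<^sup>2) powr (- al) > M"
      using \<epsilon> by simp
  qed
qed

lemma upper_bound_shifted:
  fixes u :: "real ^ 'n::finite \<Rightarrow> real \<Rightarrow> real"
  assumes q: "q > 1" and sol: "C21 \<Omega> u"
    and eq: "\<forall>x\<in>\<Omega>. \<forall>t>0. dt u x t - laplacian u x t + u x t powr q = 0"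
    and R: "R > 0" "cball x0 R \<subseteq> \<Omega>" and \<tau>: "0 < \<tau>" "\<tau> < t0"
    and al: "al = 2 / (q - 1)" and C: "C = 4 * al * (al + 1) + 2 * real CARD('n) * al"
    and lam: "lam = (C * R\<^sup>2) powr (1 / (q - 1))"
  shows "u x0 t0 \<le> blowup_profile q (t0 - \<tau>) + lam * (R\<^sup>2) powr (- al)"
proof -
  have al_pos: "al > 0"
    using q al by simp
  then have "C > 0"
    using C by (simp add: add_pos_nonneg)
  then have lam_pos: "lam > 0"
    using lam R by simp
  define V where "V x = lam * (R\<^sup>2 - (norm (x - x0))\<^sup>2) powr (- al)" for x
  obtain M where M: "\<And>y s. y \<in> cball x0 R \<Longrightarrow> \<tau> \<le> s \<Longrightarrow> s \<le> t0 \<Longrightarrow> u y s \<le> M"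
    using C21_bounded_on_cylinder[OF sol R(2) \<tau>(1)] by blast
  obtain r where r: "0 < r" "r < R" and V_pos: "\<And>x. x \<in> cball x0 r \<Longrightarrow> V x > 0"
    and V_large: "\<And>x. dist x0 x = r \<Longrightarrow> V x > M"
    unfolding V_def using osserman_barrier_on_sphere[OF al_pos lam_pos R(1)] by blast
  obtain \<delta> where \<delta>: "0 < \<delta>" "\<delta> < t0 - \<tau>" "blowup_profile q \<delta> > M"
    using powr_neg_exceeds_near_zero[of "1 / (q - 1)" "(1 / (q - 1)) powr (1 / (q - 1))" "t0 - \<tau>" M] q \<tau>
    unfolding blowup_profile_def by auto
  have cyl: "cball x0 r \<subseteq> \<Omega>"
    using R(2) r(2) by (meson less_imp_le subset_cball order_trans)
  have "u x0 t0 \<le> blowup_profile q (t0 - \<tau>) + V x0"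
  proof (rule supersolution_comparison[OF _ sol eq cyl, where a = "\<tau> + \<delta>" and b = t0])
    show "supersolution_on_cylinder q x0 r (\<tau> + \<delta>) t0 (\<lambda>x t. blowup_profile q (t - \<tau>) + V x)"
      unfolding V_def using upper_barrier_is_supersolution[OF q al C lam r] \<delta> by simp
  next
    fix x
    assume "x \<in> cball x0 r"
    then show "u x (\<tau> + \<delta>) \<le> blowup_profile q (\<tau> + \<delta> - \<tau>) + V x"
      using M[of x "\<tau> + \<delta>"] V_pos[of x] r \<delta> by (simp add: subset_cball[THEN subsetD])
  next
    fix x t
    assume x: "dist x0 x = r" and t: "\<tau> + \<delta> \<le> t" "t \<le> t0"
    then show "u x t \<le> blowup_profile q (t - \<tau>) + V x"
      using M[of x t] V_large[OF x] r \<delta> blowup_profile_pos[OF q, of "t - \<tau>"] by simp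
  next
    show "0 < q" "0 < \<tau> + \<delta>" "x0 \<in> cball x0 r" "t0 \<in> {\<tau> + \<delta>..t0}"
      using q r \<tau> \<delta> by simp_all
  qed
  then show ?thesis
    by (simp add: V_def)
qed

lemma upper_bound:
  fixes u :: "real ^ 'n::finite \<Rightarrow> real \<Rightarrow> real"
  assumes q: "q > 1" and sol: "C21 \<Omega> u"
    and eq: "\<forall>x\<in>\<Omega>. \<forall>t>0. dt u x t - laplacian u x t + u x t powr q = 0"
    and R: "R > 0" "cball x0 R \<subseteq> \<Omega>" and t0: "0 < t0"
    and al: "al = 2 / (q - 1)" and C: "C = 4 * al * (al + 1) + 2 * real CARD('n) * al"
    and lam: "lam = (C * R\<^sup>2) powr (1 / (q - 1))"
  shows "u x0 t0 \<le> blowup_profile q t0 + lam * (R\<^sup>2) powr (- al)"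
proof (rule tendsto_le[OF trivial_limit_at_right_real])
  have "((\<lambda>\<tau>. t0 - \<tau>) \<longlongrightarrow> t0) (at_right 0)"
    by (auto intro!: tendsto_eq_intros)
  with blowup_profile_isCont[OF q t0]
  show "((\<lambda>\<tau>. blowup_profile q (t0 - \<tau>) + lam * (R\<^sup>2) powr (- al))
      \<longlongrightarrow> blowup_profile q t0 + lam * (R\<^sup>2) powr (- al)) (at_right 0)"
    by (intro tendsto_add tendsto_const isCont_tendsto_compose[of _ "blowup_profile q"])
  show "\<forall>\<^sub>F \<tau> in at_right 0. u x0 t0 \<le> blowup_profile q (t0 - \<tau>) + lam * (R\<^sup>2) powr (- al)"
    unfolding eventually_at_right_field
    using upper_bound_shifted[OF q sol eq R _ _ al C lam] t0 by (intro exI[of _ t0]) auto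
qed (rule tendsto_const)

text \<open>
  Scalar estimates for the lower barrier theta phi(sigma) w^2, where w = 1 - |x - x0|^2/R^2:
  the nonlinearity gains the factor theta^(q-1) < 1,
\<close>

lemma scaled_profile_power:
  fixes q \<theta> P w \<sigma> :: real
  assumes q: "q > 1" and \<theta>: "0 < \<theta>" "\<theta> < 1" and P: "P > 0" and w: "0 < w" "w \<le> 1"
    and P_q: "P powr q = P * ((1 / (q - 1)) / \<sigma>)" and \<sigma>: "\<sigma> > 0"
  shows "(\<theta> * P * w\<^sup>2) powr q \<le> \<theta> * P * (w\<^sup>2 * \<theta> powr (q - 1) * ((1 / (q - 1)) / \<sigma>))"
proof -
  have z: "\<theta> * P * w\<^sup>2 > 0"
    using \<theta> P w by simp
  have "P * P powr (q - 1) = P * ((1 / (q - 1)) / \<sigma>)"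
    using P_q P by (simp add: powr_mult_base)
  then have "P powr (q - 1) = (1 / (q - 1)) / \<sigma>"
    using P by (metis mult_cancel_left less_irrefl)
  moreover have "(\<theta> * P * w\<^sup>2) powr (q - 1) = \<theta> powr (q - 1) * P powr (q - 1) * (w\<^sup>2) powr (q - 1)"
    using \<theta> P w by (simp add: powr_mult)
  moreover have "(\<theta> * P * w\<^sup>2) powr q = \<theta> * P * w\<^sup>2 * (\<theta> * P * w\<^sup>2) powr (q - 1)"
    using z by (simp add: powr_mult_base)
  ultimately have "(\<theta> * P * w\<^sup>2) powr q = \<theta> * P * w\<^sup>2 * (\<theta> powr (q - 1) * ((1 / (q - 1)) / \<sigma>) * (w\<^sup>2) powr (q - 1))"
    by (simp add: mult_ac)
  also have "\<dots> \<le> \<theta> * P * w\<^sup>2 * (\<theta> powr (q - 1) * ((1 / (q - 1)) / \<sigma>) * 1)"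
    using z q \<theta> \<sigma> w powr_mono2[of "q - 1" "w\<^sup>2" 1]
    by (intro mult_left_mono) (auto simp: power_le_one)
  finally show ?thesis
    by (simp add: algebra_simps)
qed

text \<open>
  and this gain pays for the spatial terms as long as sigma <= 2 T0.
\<close>

lemma short_time_inequality:
  fixes q \<theta> \<sigma> w N R T0 S :: real
  assumes q: "q > 1" and \<theta>: "0 < \<theta>" "\<theta> < 1" and \<sigma>: "\<sigma> > 0" and w: "0 < w" "w \<le> 1"
    and S: "S = R\<^sup>2 * (1 - w)" and N: "N \<ge> 0" and R: "R > 0"
    and T0: "T0 = 4 * R\<^sup>2 * (1 / (q - 1)) * (1 - \<theta> powr (q - 1)) / (4 * N + 8)\<^sup>2"
    and \<sigma>_T0: "\<sigma> \<le> 2 * T0"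
  shows "w\<^sup>2 * \<theta> powr (q - 1) * ((1 / (q - 1)) / \<sigma>)
       \<le> ((1 / (q - 1)) / \<sigma>) * w\<^sup>2 + (8 * S / R ^ 4 - 4 * N * w / R\<^sup>2)"
proof -
  define \<beta> where "\<beta> = 1 / (q - 1)"
  define \<Theta> where "\<Theta> = \<theta> powr (q - 1)"
  define A where "A = 4 * N + 8"
  have \<beta>: "\<beta> > 0" and \<Theta>: "0 < \<Theta>" "\<Theta> < 1" and A: "A \<ge> 8"
    using q \<theta> N powr_less_mono2[of "q - 1" \<theta> 1] by (auto simp: \<beta>_def \<Theta>_def A_def)
  have T0_pos: "T0 > 0"
    using T0 R \<beta> \<Theta> A unfolding \<beta>_def \<Theta>_def A_def[symmetric] by simp
  have "(1 - \<Theta>) * \<beta> / \<sigma> \<ge> (1 - \<Theta>) * \<beta> / (2 * T0)"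
    using \<sigma> \<sigma>_T0 \<Theta> \<beta> T0_pos by (intro divide_left_mono) auto
  also have "(1 - \<Theta>) * \<beta> / (2 * T0) = A\<^sup>2 / (8 * R\<^sup>2)"
    unfolding T0 \<beta>_def[symmetric] \<Theta>_def[symmetric] A_def[symmetric]
    using R \<beta> \<Theta> A by (simp add: field_simps power2_eq_square)
  finally have gap: "A\<^sup>2 / (8 * R\<^sup>2) \<le> (1 - \<Theta>) * \<beta> / \<sigma>" .
  have "0 \<le> (A * w - 8)\<^sup>2" "0 \<le> A * w"
    using A w by simp_all
  moreover have "(A * w - 8)\<^sup>2 = (A * w)\<^sup>2 - 16 * (A * w) + 64" "A\<^sup>2 / 8 * w\<^sup>2 = (A * w)\<^sup>2 / 8"
    by (simp_all add: power2_eq_square algebra_simps)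
  ultimately have "A * w - 8 \<le> A\<^sup>2 / 8 * w\<^sup>2"
    by linarith
  then have "(A * w - 8) / R\<^sup>2 \<le> (A\<^sup>2 / 8 * w\<^sup>2) / R\<^sup>2"
    using R by (intro divide_right_mono) auto
  also have "\<dots> = w\<^sup>2 * (A\<^sup>2 / (8 * R\<^sup>2))"
    by (simp add: field_simps)
  also have "\<dots> \<le> w\<^sup>2 * ((1 - \<Theta>) * \<beta> / \<sigma>)"
    using gap by (intro mult_left_mono) auto
  finally have key: "(A * w - 8) / R\<^sup>2 \<le> w\<^sup>2 * ((1 - \<Theta>) * \<beta> / \<sigma>)" .
  have "8 * S / R ^ 4 - 4 * N * w / R\<^sup>2 = - ((A * w - 8) / R\<^sup>2)"
    unfolding S A_def using R by (simp add: field_simps power2_eq_square power4_eq_xxxx)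
  moreover have "w\<^sup>2 * \<Theta> * (\<beta> / \<sigma>) = (\<beta> / \<sigma>) * w\<^sup>2 - w\<^sup>2 * ((1 - \<Theta>) * \<beta> / \<sigma>)"
    using \<sigma> by (simp add: field_simps)
  ultimately show ?thesis
    using key unfolding \<beta>_def[symmetric] \<Theta>_def[symmetric] by (smt (verit))
qed

text \<open>
  Hence theta phi(sigma) w^2 is a subsolution, in scalar form,
\<close>

lemma lower_barrier_inequality:
  fixes q \<theta> P \<sigma> S N R T0 :: real
  assumes q: "q > 1" and \<theta>: "0 < \<theta>" "\<theta> < 1" and P: "P > 0" and \<sigma>: "\<sigma> > 0"
    and P_q: "P powr q = P * ((1 / (q - 1)) / \<sigma>)"
    and S: "0 \<le> S" "S < R\<^sup>2" and N: "N \<ge> 0" and R: "R > 0"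
    and T0: "T0 = 4 * R\<^sup>2 * (1 / (q - 1)) * (1 - \<theta> powr (q - 1)) / (4 * N + 8)\<^sup>2"
    and \<sigma>_T0: "\<sigma> \<le> 2 * T0"
  shows "\<theta> * - (P powr q) * (1 - S / R\<^sup>2)\<^sup>2
         - \<theta> * P * (2 * N * (- 2 / R\<^sup>2 * (1 - S / R\<^sup>2)) + 4 * S * (2 / R\<^sup>2 / R\<^sup>2))
         + (\<theta> * P * (1 - S / R\<^sup>2)\<^sup>2) powr q \<le> 0"
proof -
  define w where "w = 1 - S / R\<^sup>2"
  have w: "0 < w" "w \<le> 1" and S_w: "S = R\<^sup>2 * (1 - w)"
    using S R by (auto simp: w_def field_simps)
  have "(\<theta> * P * w\<^sup>2) powr q \<le> \<theta> * P * (w\<^sup>2 * \<theta> powr (q - 1) * ((1 / (q - 1)) / \<sigma>))"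
    by (rule scaled_profile_power[OF q \<theta> P w P_q \<sigma>])
  also have "\<dots> \<le> \<theta> * P * (((1 / (q - 1)) / \<sigma>) * w\<^sup>2 + (8 * S / R ^ 4 - 4 * N * w / R\<^sup>2))"
    using short_time_inequality[OF q \<theta> \<sigma> w S_w N R T0 \<sigma>_T0] \<theta> P by (intro mult_left_mono) auto
  also have "\<dots> = \<theta> * P powr q * w\<^sup>2 + \<theta> * P * (8 * S / R ^ 4 - 4 * N * w / R\<^sup>2)"
    unfolding P_q by (simp add: algebra_simps)
  finally show ?thesis
    unfolding w_def[symmetric] using R by (simp add: field_simps power4_eq_xxxx power2_eq_square)
qed

lemma lower_barrier_is_subsolution:
  fixes x0 :: "real ^ 'n::finite"
  assumes q: "q > 1" and \<theta>: "0 < \<theta>" "\<theta> < 1" and R: "R > 0"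
    and T0: "T0 = 4 * R\<^sup>2 * (1 / (q - 1)) * (1 - \<theta> powr (q - 1)) / (4 * real CARD('n) + 8)\<^sup>2"
    and \<tau>: "\<tau> < a" "b - \<tau> \<le> 2 * T0"
  shows "subsolution_on_cylinder q x0 R a b
           (\<lambda>x t. \<theta> * blowup_profile q (t - \<tau>) * (1 - (norm (x - x0))\<^sup>2 / R\<^sup>2)\<^sup>2)"
proof -
  define Wt where "Wt x t = 0 + \<theta> * - (blowup_profile q (t - \<tau>) powr q) * (1 - (norm (x - x0))\<^sup>2 / R\<^sup>2)\<^sup>2"
    for x t
  define Wx where "Wx i x t = \<theta> * blowup_profile q (t - \<tau>) * (2 * (x - x0) $ i * (- 2 / R\<^sup>2 * (1 - (norm (x - x0))\<^sup>2 / R\<^sup>2)))"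
    for i x t
  define Wxx where "Wxx i x t = \<theta> * blowup_profile q (t - \<tau>)
      * (2 * (- 2 / R\<^sup>2 * (1 - (norm (x - x0))\<^sup>2 / R\<^sup>2)) + 4 * ((x - x0) $ i)\<^sup>2 * (2 / R\<^sup>2 / R\<^sup>2))"
    for i x t
  have W_eq: "(\<lambda>x t. \<theta> * blowup_profile q (t - \<tau>) * (1 - (norm (x - x0))\<^sup>2 / R\<^sup>2)\<^sup>2)
      = (\<lambda>x t. 0 + \<theta> * blowup_profile q (t - \<tau>) * (1 - (norm (x - x0))\<^sup>2 / R\<^sup>2)\<^sup>2)"
    by simp
  have "classical_on_cylinder x0 R a b
      (\<lambda>x t. \<theta> * blowup_profile q (t - \<tau>) * (1 - (norm (x - x0))\<^sup>2 / R\<^sup>2)\<^sup>2) Wt Wx Wxx"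
    unfolding W_eq Wt_def Wx_def Wxx_def
  proof (rule radial_barrier_classical[where B = "\<lambda>t. \<theta> * blowup_profile q (t - \<tau>)"
        and g = "\<lambda>\<rho>. (1 - \<rho> / R\<^sup>2)\<^sup>2"])
    show "continuous_on {a..b} (\<lambda>t. 0)" "((\<lambda>t. 0) has_real_derivative 0) (at t)" for t
      by (rule continuous_on_const DERIV_const)+
    show "continuous_on {a..b} (\<lambda>t. \<theta> * blowup_profile q (t - \<tau>))"
      using shifted_profile_regular(1)[OF q \<tau>(1)] by (intro continuous_intros)
    show "((\<lambda>t. \<theta> * blowup_profile q (t - \<tau>)) has_real_derivative \<theta> * - (blowup_profile q (t - \<tau>) powr q)) (at t)"
      if "a < t" for t
      using shifted_profile_regular(2)[OF q \<tau>(1) that] by (rule DERIV_cmult)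
    show "continuous_on {0..R\<^sup>2} (\<lambda>\<rho>. (1 - \<rho> / R\<^sup>2)\<^sup>2)"
      using R by (intro continuous_intros) auto
    show "((\<lambda>\<rho>. (1 - \<rho> / R\<^sup>2)\<^sup>2) has_real_derivative - 2 / R\<^sup>2 * (1 - \<rho> / R\<^sup>2)) (at \<rho>)"
      "((\<lambda>\<rho>. - 2 / R\<^sup>2 * (1 - \<rho> / R\<^sup>2)) has_real_derivative 2 / R\<^sup>2 / R\<^sup>2) (at \<rho>)" for \<rho>
      using R by (auto intro!: derivative_eq_intros simp: field_simps)
  qed
  moreover have "Wt x t - (\<Sum>i\<in>UNIV. Wxx i x t)
      + (\<theta> * blowup_profile q (t - \<tau>) * (1 - (norm (x - x0))\<^sup>2 / R\<^sup>2)\<^sup>2) powr q \<le> 0"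
    if x: "x \<in> ball x0 R" and t: "t \<in> {a<..b}" for x t
  proof -
    have "norm (x - x0) < R"
      using x by (simp add: dist_norm norm_minus_commute)
    then have S: "0 \<le> (norm (x - x0))\<^sup>2" "(norm (x - x0))\<^sup>2 < R\<^sup>2"
      by (simp_all add: power_strict_mono)
    have \<sigma>: "t - \<tau> > 0" "t - \<tau> \<le> 2 * T0"
      using t \<tau> by auto
    from lower_barrier_inequality[OF q \<theta> blowup_profile_pos[OF q \<sigma>(1)] \<sigma>(1)
        blowup_profile_powr[OF q \<sigma>(1)] S _ R T0 \<sigma>(2)]
    show ?thesis
      unfolding Wt_def Wxx_def sum_radial_second_derivatives by (simp add: mult.assoc)
  qed
  ultimately show ?thesis
    unfolding subsolution_on_cylinder_def by blast
qed

lemma lower_barrier_below_profile: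
  fixes x0 x :: "real ^ 'n::finite"
  assumes x: "x \<in> cball x0 R" and R: "R > 0" and \<theta>: "0 < \<theta>" "\<theta> < 1" and P: "P \<ge> 0"
  shows "\<theta> * P * (1 - (norm (x - x0))\<^sup>2 / R\<^sup>2)\<^sup>2 \<le> P"
proof -
  have "norm (x - x0) \<le> R"
    using x by (simp add: dist_norm norm_minus_commute)
  then have "(norm (x - x0))\<^sup>2 \<le> R\<^sup>2"
    by (simp add: power_mono)
  then have "0 \<le> 1 - (norm (x - x0))\<^sup>2 / R\<^sup>2" "1 - (norm (x - x0))\<^sup>2 / R\<^sup>2 \<le> 1"
    using R by (simp_all add: field_simps)
  then have "\<theta> * (1 - (norm (x - x0))\<^sup>2 / R\<^sup>2)\<^sup>2 \<le> 1"
    using \<theta> by (intro mult_le_one) (auto simp: power_le_one)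
  then show ?thesis
    using P mult_left_le[of "\<theta> * (1 - (norm (x - x0))\<^sup>2 / R\<^sup>2)\<^sup>2" P] by (simp add: mult_ac)
qed

text \<open>
  Lower bound with a shift s: large initial values place the barrier below u at an early
  time tau, and the barrier vanishes on the lateral boundary.
\<close>

lemma lower_bound_shifted:
  fixes u :: "real ^ 'n::finite \<Rightarrow> real \<Rightarrow> real"
  assumes q: "q > 1" and sol: "C21 \<Omega> u" and pos: "\<forall>x\<in>\<Omega>. \<forall>t>0. u x t > 0"
    and eq: "\<forall>x\<in>\<Omega>. \<forall>t>0. dt u x t - laplacian u x t + u x t powr q = 0"
    and R: "R > 0" "cball x0 R \<subseteq> \<Omega>"
    and large: "\<forall>M. \<exists>\<delta>>0. \<forall>t. 0 < t \<and> t < \<delta> \<longrightarrow> (\<forall>x\<in>cball x0 R. M \<le> u x t)"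
    and \<theta>: "0 < \<theta>" "\<theta> < 1"
    and T0: "T0 = 4 * R\<^sup>2 * (1 / (q - 1)) * (1 - \<theta> powr (q - 1)) / (4 * real CARD('n) + 8)\<^sup>2"
    and t0: "0 < t0" "t0 < T0" and s: "0 < s" "s < T0"
  shows "\<theta> * blowup_profile q (t0 + s) \<le> u x0 t0"
proof -
  obtain \<delta> where \<delta>: "\<delta> > 0" "\<And>t x. 0 < t \<Longrightarrow> t < \<delta> \<Longrightarrow> x \<in> cball x0 R \<Longrightarrow> blowup_profile q s \<le> u x t"
    using large by blast
  define \<tau> where "\<tau> = min \<delta> t0 / 2"
  have \<tau>: "0 < \<tau>" "\<tau> < \<delta>" "\<tau> < t0"
    using \<delta> t0 by (auto simp: \<tau>_def)
  define g where "g x = (1 - (norm (x - x0))\<^sup>2 / R\<^sup>2)\<^sup>2" for x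
  have "\<theta> * blowup_profile q (t0 - (\<tau> - s)) * g x0 \<le> u x0 t0"
  proof (rule subsolution_comparison[OF _ sol pos eq R(2) \<tau>(1), where b = t0])
    show "subsolution_on_cylinder q x0 R \<tau> t0 (\<lambda>x t. \<theta> * blowup_profile q (t - (\<tau> - s)) * g x)"
      unfolding g_def using lower_barrier_is_subsolution[OF q \<theta> R(1) T0] s t0 \<tau> by simp
  next
    fix x
    assume x: "x \<in> cball x0 R"
    have "\<theta> * blowup_profile q (\<tau> - (\<tau> - s)) * g x \<le> blowup_profile q s"
      unfolding g_def using lower_barrier_below_profile[OF x R(1) \<theta>] blowup_profile_pos[OF q s(1)] by simp
    also have "\<dots> \<le> u x \<tau>"
      using \<delta>(2)[OF \<tau>(1) \<tau>(2) x] .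
    finally show "\<theta> * blowup_profile q (\<tau> - (\<tau> - s)) * g x \<le> u x \<tau>" .
  next
    fix x t
    assume x: "dist x0 x = R" and t: "\<tau> \<le> t" "t \<le> t0"
    have "g x = 0"
      using x R by (simp add: g_def dist_norm norm_minus_commute)
    moreover have "u x t > 0"
      using pos R(2) x t \<tau> by auto
    ultimately show "\<theta> * blowup_profile q (t - (\<tau> - s)) * g x \<le> u x t"
      by simp
  next
    show "0 < q" "x0 \<in> cball x0 R" "t0 \<in> {\<tau>..t0}"
      using q R \<tau> by simp_all
  qed
  moreover have "blowup_profile q (t0 + s) \<le> blowup_profile q (t0 - (\<tau> - s))"
    using blowup_profile_antimono[OF q, of "t0 - (\<tau> - s)" "t0 + s"] \<tau> s by simp
  then have "\<theta> * blowup_profile q (t0 + s) \<le> \<theta> * blowup_profile q (t0 - (\<tau> - s)) * g x0"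
    using \<theta> by (simp add: g_def)
  ultimately show ?thesis
    by linarith
qed

lemma lower_bound:
  fixes u :: "real ^ 'n::finite \<Rightarrow> real \<Rightarrow> real"
  assumes q: "q > 1" and sol: "C21 \<Omega> u" and pos: "\<forall>x\<in>\<Omega>. \<forall>t>0. u x t > 0"
    and eq: "\<forall>x\<in>\<Omega>. \<forall>t>0. dt u x t - laplacian u x t + u x t powr q = 0"
    and R: "R > 0" "cball x0 R \<subseteq> \<Omega>"
    and large: "\<forall>M. \<exists>\<delta>>0. \<forall>t. 0 < t \<and> t < \<delta> \<longrightarrow> (\<forall>x\<in>cball x0 R. M \<le> u x t)"
    and \<theta>: "0 < \<theta>" "\<theta> < 1"
    and T0: "T0 = 4 * R\<^sup>2 * (1 / (q - 1)) * (1 - \<theta> powr (q - 1)) / (4 * real CARD('n) + 8)\<^sup>2"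
    and t0: "0 < t0" "t0 < T0"
  shows "\<theta> * blowup_profile q t0 \<le> u x0 t0"
proof (rule tendsto_le[OF trivial_limit_at_right_real tendsto_const])
  have "((\<lambda>s. t0 + s) \<longlongrightarrow> t0) (at_right 0)"
    by (auto intro!: tendsto_eq_intros)
  with blowup_profile_isCont[OF q t0(1)]
  show "((\<lambda>s. \<theta> * blowup_profile q (t0 + s)) \<longlongrightarrow> \<theta> * blowup_profile q t0) (at_right 0)"
    by (intro tendsto_mult_left isCont_tendsto_compose[of _ "blowup_profile q"])
  show "\<forall>\<^sub>F s in at_right 0. \<theta> * blowup_profile q (t0 + s) \<le> u x0 t0"
    unfolding eventually_at_right_field
    using lower_bound_shifted[OF q sol pos eq R large \<theta> T0 t0] t0 by (intro exI[of _ T0]) auto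
qed

lemma uniform_limit_between_bounds:
  fixes f :: "real \<Rightarrow> 'a \<Rightarrow> real" and c \<beta> C :: real
  assumes c: "c > 0" and \<beta>: "\<beta> > 0"
    and lower: "\<And>\<theta>. 0 < \<theta> \<Longrightarrow> \<theta> < 1 \<Longrightarrow> \<exists>T>0. \<forall>t x. 0 < t \<longrightarrow> t < T \<longrightarrow> x \<in> G \<longrightarrow> \<theta> * c \<le> f t x"
    and upper: "\<And>t x. 0 < t \<Longrightarrow> x \<in> G \<Longrightarrow> f t x \<le> c + t powr \<beta> * C"
  shows "uniform_limit G f (\<lambda>_. c) (at_right 0)"
  unfolding uniform_limit_iff
proof (intro allI impI)
  fix e :: real
  assume e: "e > 0"
  define \<theta> where "\<theta> = 1 - min (1 / 2) (e / (2 * c))"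
  have \<theta>: "0 < \<theta>" "\<theta> < 1" "c - e < \<theta> * c"
    using e c by (auto simp: \<theta>_def min_def field_simps)
  obtain T where T: "T > 0" "\<And>t x. 0 < t \<Longrightarrow> t < T \<Longrightarrow> x \<in> G \<Longrightarrow> \<theta> * c \<le> f t x"
    using lower[OF \<theta>(1,2)] by blast
  have "((\<lambda>t. t powr \<beta> * C) \<longlongrightarrow> 0 * C) (at_right 0)"
    using \<beta> by (intro tendsto_mult_right tendsto_zero_powrI tendsto_ident_at tendsto_const)
      (auto simp: eventually_at_right_field intro: exI[of _ 1])
  then have "\<forall>\<^sub>F t in at_right 0. t powr \<beta> * C < e"
    using e by (simp add: order_tendstoD(2))
  moreover have "\<forall>\<^sub>F t in at_right 0. 0 < t \<and> t < T"
    using T(1) by (auto simp: eventually_at_right_field intro: exI[of _ T])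
  ultimately show "\<forall>\<^sub>F t in at_right 0. \<forall>x\<in>G. dist (f t x) c < e"
  proof eventually_elim
    case (elim t)
    show ?case
      using T(2)[of t] upper[of t] elim \<theta>(3) by (fastforce simp: dist_real_def abs_less_iff)
  qed
qed

lemma compact_thickening:
  fixes K \<Omega> :: "'a::euclidean_space set"
  assumes "compact K" "K \<subseteq> \<Omega>" "open \<Omega>"
  obtains R K' where "R > 0" "compact K'" "K' \<subseteq> \<Omega>" "\<And>x. x \<in> K \<Longrightarrow> cball x R \<subseteq> K'"
proof -
  obtain d where d: "d > 0" "\<And>x y. x \<in> K \<Longrightarrow> y \<in> - \<Omega> \<Longrightarrow> d \<le> dist x y"
  proof -
    have "closed (- \<Omega>)" "K \<inter> - \<Omega> = {}"
      using assms(2,3) by auto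
    then have "\<exists>\<delta>>0. \<forall>x\<in>K. \<forall>y\<in>- \<Omega>. \<delta> \<le> dist x y"
      by (rule separate_compact_closed[OF assms(1)])
    then obtain \<delta> where "\<delta> > 0" "\<forall>x\<in>K. \<forall>y\<in>- \<Omega>. \<delta> \<le> dist x y"
      by blast
    then show ?thesis
      by (intro that[of \<delta>]) auto
  qed
  define K' where "K' = (\<lambda>p. fst p + snd p) ` (K \<times> cball 0 (d / 2))"
  show ?thesis
  proof (rule that[of "d / 2" K'])
    show "d / 2 > 0"
      using d by simp
    show "compact K'"
      unfolding K'_def by (intro compact_continuous_image compact_Times assms(1) compact_cball continuous_intros)
    show "cball x (d / 2) \<subseteq> K'" if "x \<in> K" for x
    proof
      fix y
      assume "y \<in> cball x (d / 2)"
      then have "(x, y - x) \<in> K \<times> cball 0 (d / 2)"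
        using that by (simp add: dist_norm norm_minus_commute)
      moreover have "y = fst (x, y - x) + snd (x, y - x)"
        by simp
      ultimately show "y \<in> K'"
        unfolding K'_def by blast
    qed
    show "K' \<subseteq> \<Omega>"
    proof
      fix y
      assume "y \<in> K'"
      then obtain x b where "x \<in> K" "norm b \<le> d / 2" "y = x + b"
        unfolding K'_def by auto
      then have "dist x y < d"
        using d(1) by (simp add: dist_norm)
      then show "y \<in> \<Omega>"
        using d(2)[OF \<open>x \<in> K\<close>, of y] by fastforce
    qed
  qed
qed

lemma large_solution_uniform_balls:
  fixes u :: "real ^ 'n::finite \<Rightarrow> real \<Rightarrow> real"
  assumes "open \<Omega>" "large_initial_solution q \<Omega> u" "compact K" "K \<subseteq> \<Omega>"
  obtains R where "R > 0" "\<And>x. x \<in> K \<Longrightarrow> cball x R \<subseteq> \<Omega>"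
    "\<And>x. x \<in> K \<Longrightarrow> \<forall>M. \<exists>\<delta>>0. \<forall>t. 0 < t \<and> t < \<delta> \<longrightarrow> (\<forall>y\<in>cball x R. M \<le> u y t)"
proof -
  obtain R K' where R: "R > 0" and K': "compact K'" "K' \<subseteq> \<Omega>"
    and balls: "\<And>x. x \<in> K \<Longrightarrow> cball x R \<subseteq> K'"
    using compact_thickening[OF assms(3,4,1)] by blast
  have "\<forall>K. compact K \<and> K \<subseteq> \<Omega> \<longrightarrow> (\<forall>M. \<exists>\<delta>>0. \<forall>t. 0 < t \<and> t < \<delta> \<longrightarrow> (\<forall>x\<in>K. u x t \<ge> M))"
    using assms(2) unfolding large_initial_solution_def by simp
  then have large: "\<forall>M. \<exists>\<delta>>0. \<forall>t. 0 < t \<and> t < \<delta> \<longrightarrow> (\<forall>y\<in>K'. M \<le> u y t)"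
    using K' by simp
  have "\<forall>M. \<exists>\<delta>>0. \<forall>t. 0 < t \<and> t < \<delta> \<longrightarrow> (\<forall>y\<in>cball x R. M \<le> u y t)" if "x \<in> K" for x
  proof
    fix M
    obtain \<delta> where "\<delta> > 0" "\<forall>t. 0 < t \<and> t < \<delta> \<longrightarrow> (\<forall>y\<in>K'. M \<le> u y t)"
      using large by blast
    then show "\<exists>\<delta>>0. \<forall>t. 0 < t \<and> t < \<delta> \<longrightarrow> (\<forall>y\<in>cball x R. M \<le> u y t)"
      using balls[OF that] by (meson subsetD)
  qed
  moreover have "cball x R \<subseteq> \<Omega>" if "x \<in> K" for x
    using balls[OF that] K'(2) by (rule order_trans)
  ultimately show ?thesis
    using that[OF R] by blast
qed

lemma lower_bound_time_pos:
  assumes "q > 1" "0 < \<theta>" "\<theta> < 1" "R > 0"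
  shows "4 * R\<^sup>2 * (1 / (q - 1)) * (1 - \<theta> powr (q - 1)) / (4 * real CARD('n) + 8)\<^sup>2 > 0"
  using assms powr_less_mono2[of "q - 1" \<theta> 1] by simp

lemma uniform_limit_from_profile_bounds:
  fixes v :: "'a \<Rightarrow> real \<Rightarrow> real"
  assumes q: "q > 1"
    and lower: "\<And>\<theta>. 0 < \<theta> \<Longrightarrow> \<theta> < 1 \<Longrightarrow>
                  \<exists>T>0. \<forall>t x. 0 < t \<longrightarrow> t < T \<longrightarrow> x \<in> G \<longrightarrow> \<theta> * blowup_profile q t \<le> v x t"
    and upper: "\<And>t x. 0 < t \<Longrightarrow> x \<in> G \<Longrightarrow> v x t \<le> blowup_profile q t + K"
  shows "uniform_limit G (\<lambda>t x. t powr (1 / (q - 1)) * v x t) (\<lambda>x. (1 / (q - 1)) powr (1 / (q - 1))) (at_right 0)"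
proof (rule uniform_limit_between_bounds[where C = K])
  fix \<theta> :: real
  assume "0 < \<theta>" "\<theta> < 1"
  then obtain T where "T > 0" "\<forall>t x. 0 < t \<longrightarrow> t < T \<longrightarrow> x \<in> G \<longrightarrow> \<theta> * blowup_profile q t \<le> v x t"
    using lower by blast
  moreover have "\<theta> * blowup_profile q t \<le> v x t \<Longrightarrow> 0 < t \<Longrightarrow>
      \<theta> * (1 / (q - 1)) powr (1 / (q - 1)) \<le> t powr (1 / (q - 1)) * v x t" for t x
    using mult_left_mono[of "\<theta> * blowup_profile q t" "v x t" "t powr (1 / (q - 1))"]
      blowup_profile_scaling[OF q, of t] by (simp add: mult.left_commute)
  ultimately show "\<exists>T>0. \<forall>t x. 0 < t \<longrightarrow> t < T \<longrightarrow> x \<in> G \<longrightarrow>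
      \<theta> * (1 / (q - 1)) powr (1 / (q - 1)) \<le> t powr (1 / (q - 1)) * v x t"
    by blast
next
  fix t :: real and x
  assume "0 < t" "x \<in> G"
  then show "t powr (1 / (q - 1)) * v x t \<le> (1 / (q - 1)) powr (1 / (q - 1)) + t powr (1 / (q - 1)) * K"
    using mult_left_mono[OF upper, of t x "t powr (1 / (q - 1))"] blowup_profile_scaling[OF q, of t]
    by (simp add: distrib_left)
next
  show "(1 / (q - 1)) powr (1 / (q - 1)) > 0" "1 / (q - 1) > 0"
    using q by simp_all
qed

text \<open>
  The main theorem: both bounds hold uniformly for x0 in the closure of G with a common
  radius R, so t^(1/(q-1)) u(x,t) tends to c_q uniformly on G.
\<close>

theorem lemma3p2:
  fixes q :: real and \<Omega> :: "(real ^ 'n::finite) set" and u :: "real ^ 'n \<Rightarrow> real \<Rightarrow> real"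
  assumes "q > 1"
    and "open \<Omega>" and "connected \<Omega>"
    and "large_initial_solution q \<Omega> u"
  shows "\<forall>G. bounded G \<and> open G \<and> closure G \<subseteq> \<Omega> \<longrightarrow>
           uniform_limit G (\<lambda>t x. t powr (1 / (q - 1)) * u x t)
             (\<lambda>x. (1 / (q - 1)) powr (1 / (q - 1))) (at_right 0)"
proof (intro allI impI)
  fix G :: "(real ^ 'n) set"
  assume G: "bounded G \<and> open G \<and> closure G \<subseteq> \<Omega>"
  note q = \<open>q > 1\<close>
  have sol: "C21 \<Omega> u" and pos: "\<forall>x\<in>\<Omega>. \<forall>t>0. u x t > 0"
    and eq: "\<forall>x\<in>\<Omega>. \<forall>t>0. dt u x t - laplacian u x t + u x t powr q = 0"
    using assms(4) unfolding large_initial_solution_def by auto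
  have "compact (closure G)" "closure G \<subseteq> \<Omega>"
    using G by (simp_all add: compact_closure)
  then obtain R where R: "R > 0" and ball: "\<And>x. x \<in> closure G \<Longrightarrow> cball x R \<subseteq> \<Omega>"
    and large: "\<And>x. x \<in> closure G \<Longrightarrow> \<forall>M. \<exists>\<delta>>0. \<forall>t. 0 < t \<and> t < \<delta> \<longrightarrow> (\<forall>y\<in>cball x R. M \<le> u y t)"
    using large_solution_uniform_balls[OF assms(2,4)] by blast
  define al where "al = 2 / (q - 1)"
  define C where "C = 4 * al * (al + 1) + 2 * real CARD('n) * al"
  define lam where "lam = (C * R\<^sup>2) powr (1 / (q - 1))"
  have "uniform_limit (closure G) (\<lambda>t x. t powr (1 / (q - 1)) * u x t)
      (\<lambda>x. (1 / (q - 1)) powr (1 / (q - 1))) (at_right 0)"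
  proof (rule uniform_limit_from_profile_bounds[OF q])
    fix \<theta> :: real
    assume \<theta>: "0 < \<theta>" "\<theta> < 1"
    show "\<exists>T>0. \<forall>t x. 0 < t \<longrightarrow> t < T \<longrightarrow> x \<in> closure G \<longrightarrow> \<theta> * blowup_profile q t \<le> u x t"
    proof (intro exI conjI allI impI)
      show "4 * R\<^sup>2 * (1 / (q - 1)) * (1 - \<theta> powr (q - 1)) / (4 * real CARD('n) + 8)\<^sup>2 > 0"
        by (rule lower_bound_time_pos[OF q \<theta> R])
      fix t x
      assume "0 < t" "t < 4 * R\<^sup>2 * (1 / (q - 1)) * (1 - \<theta> powr (q - 1)) / (4 * real CARD('n) + 8)\<^sup>2"
        "x \<in> closure G"
      then show "\<theta> * blowup_profile q t \<le> u x t"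
        using lower_bound[OF q sol pos eq R ball large \<theta> refl] by simp
    qed
  next
    show "u x t \<le> blowup_profile q t + lam * (R\<^sup>2) powr (- al)" if "0 < t" "x \<in> closure G" for t x
      by (rule upper_bound[OF q sol eq R ball[OF that(2)] that(1) al_def C_def lam_def])
  qed
  then show "uniform_limit G (\<lambda>t x. t powr (1 / (q - 1)) * u x t)
      (\<lambda>x. (1 / (q - 1)) powr (1 / (q - 1))) (at_right 0)"
    by (rule uniform_limit_on_subset[OF _ closure_subset])
qed

end
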